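(* In the hyperfractal mobile network model with constant node speed $v$, for all positive integers $n_i,n_j$, $$I(n_i,n_j)\le \frac{1}{v(n_i+n_j)}.$$
   Context: The map is the unit square; streets are horizontal or vertical segments of length $1$ (the lines of the hyperfractal support $\mathcal{X}_l=\{(b2^{-(l+1)},y): b \text{ odd},\, 1\le b\le 2^{l+1}-1, y\in[0,1]\}\cup\{(x,b2^{-(l+1)}): b \text{ odd},\, 1\le b\le 2^{l+1}-1, x\in[0,1]\}$). Mobile nodes on a street are uniformly located (Poisson) on the street and move along it at constant speed $v$ in either direction (streets bidirectional). Canyon effect: a node transmits only to nodes on its own street; a packet passes to a perpendicular street only when a node carrying it reaches the intersection, at which moment it can transmit to a node on the perpendicular street. $I(n_i,n_j)$ denotes the average time a packet takes to pass from a street containing $n_i$ nodes to an intersecting street containing $n_j$ nodes, assuming all nodes on the first street carry the packet. *)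

theory Defs
  imports "HOL-Probability.Probability"
begin

text \<open>Model of one node on a street of length 1 (coordinate in [0,1]).
  A node is described by its position x (uniform on [0,1]) and its direction
  of motion (True = increasing coordinate, False = decreasing), uniform.
  Streets are traversed cyclically (position taken modulo the street length 1),
  so the time for a node at x with direction d to reach the point c of its
  street is the following.\<close>

definition node_space :: "(real \<times> bool) measure" where
  "node_space = uniform_measure lborel {0..1} \<Otimes>\<^sub>M uniform_count_measure (UNIV :: bool set)"

definition hit_time :: "real \<Rightarrow> real \<Rightarrow> real \<times> bool \<Rightarrow> real" where
  "hit_time v c p = (if snd p then frac (c - fst p) else frac (fst p - c)) / v"

text \<open>Nodes 0..ni-1 are on the first street (intersection at coordinate a of that
  street), nodes ni..ni+nj-1 on the second, perpendicular street (intersection at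
  coordinate b of that street). All nodes of the first street carry the packet;
  the packet passes to the second street as soon as some node of either street is
  at the intersection.\<close>

definition passage_time :: "real \<Rightarrow> nat \<Rightarrow> nat \<Rightarrow> real \<Rightarrow> real \<Rightarrow> (nat \<Rightarrow> real \<times> bool) \<Rightarrow> real" where
  "passage_time v ni nj a b \<omega> =
     Min ((\<lambda>k. if k < ni then hit_time v a (\<omega> k) else hit_time v b (\<omega> k)) ` {..<ni + nj})"

definition I_pass :: "real \<Rightarrow> nat \<Rightarrow> nat \<Rightarrow> real \<Rightarrow> real \<Rightarrow> real" where
  "I_pass v ni nj a b =
     (\<integral>\<omega>. passage_time v ni nj a b \<omega> \<partial>(PiM {..<ni + nj} (\<lambda>_. node_space)))"

end

theory Submission
  imports Defs
begin

text \<open>The distance a node still has to travel to the intersection is uniform on \<open>[0, 1)\<close>,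
  so each hitting time \<open>T\<close> satisfies \<open>P(T > t) \<le> 1 - v t \<le> exp (- v t)\<close>; by independence the
  minimum has tail at most \<open>exp (- n v t)\<close>, and integrating the tail bounds its mean by
  \<open>1 / (n v)\<close>.\<close>

lemma nn_integral_eq_tail_integral:
  fixes f :: "'a \<Rightarrow> real"
  assumes "sigma_finite_measure M" and f[measurable]: "f \<in> borel_measurable M"
    and nonneg: "\<And>x. x \<in> space M \<Longrightarrow> 0 \<le> f x"
  shows "(\<integral>\<^sup>+ x. ennreal (f x) \<partial>M)
       = (\<integral>\<^sup>+ t. indicator {0..} t * emeasure M {x \<in> space M. t < f x} \<partial>lborel)"
proof -
  interpret pair_sigma_finite M lborel
    using assms(1) by (simp add: pair_sigma_finite_def lborel.sigma_finite_measure_axioms)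
  have measurable_tail_indicator:
    "(\<lambda>(x, t). indicator {0..<f x} t :: ennreal) \<in> borel_measurable (M \<Otimes>\<^sub>M lborel)"
  proof -
    have "(\<lambda>(x, t). indicator {0..<f x} t :: ennreal)
        = (\<lambda>p. if 0 \<le> snd p \<and> snd p < f (fst p) then 1 else 0)"
      by (auto simp: fun_eq_iff indicator_def)
    then show ?thesis by simp
  qed
  have "(\<integral>\<^sup>+ x. ennreal (f x) \<partial>M) = (\<integral>\<^sup>+ x. \<integral>\<^sup>+ t. indicator {0..<f x} t \<partial>lborel \<partial>M)"
    using nonneg by (intro nn_integral_cong) simp
  also have "\<dots> = (\<integral>\<^sup>+ t. \<integral>\<^sup>+ x. indicator {0..<f x} t \<partial>M \<partial>lborel)"
    using Fubini'[OF measurable_tail_indicator] by simp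
  also have "\<dots> = (\<integral>\<^sup>+ t. indicator {0..} t * emeasure M {x \<in> space M. t < f x} \<partial>lborel)"
  proof (intro nn_integral_cong)
    fix t :: real
    have "(\<integral>\<^sup>+ x. indicator {0..<f x} t \<partial>M)
        = (\<integral>\<^sup>+ x. indicator {0..} t * indicator {x \<in> space M. t < f x} x \<partial>M)"
      by (intro nn_integral_cong) (auto simp: indicator_def)
    also have "\<dots> = indicator {0..} t * emeasure M {x \<in> space M. t < f x}"
      by (simp add: nn_integral_cmult)
    finally show "(\<integral>\<^sup>+ x. indicator {0..<f x} t \<partial>M)
        = indicator {0..} t * emeasure M {x \<in> space M. t < f x}" .
  qed
  finally show ?thesis .
qed

lemma nn_integral_exp_neg:
  fixes L :: real assumes "L > 0"
  shows "(\<integral>\<^sup>+ t. indicator {0..} t * ennreal (exp (- (L * t))) \<partial>lborel) = ennreal (1 / L)"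
proof -
  interpret prob_space "density lborel (exponential_density L)"
    using prob_space_exponential_density[OF assms] .
  have "(\<integral>\<^sup>+ t. indicator {0..} t * ennreal (exp (- (L * t))) \<partial>lborel)
      = (\<integral>\<^sup>+ t. exponential_density L t * ennreal (1 / L) \<partial>lborel)"
    using assms by (intro nn_integral_cong)
      (auto simp: exponential_density_def ennreal_mult[symmetric] indicator_def mult.commute)
  also have "\<dots> = emeasure (density lborel (exponential_density L)) UNIV * ennreal (1 / L)"
    by (simp add: nn_integral_multc emeasure_density)
  finally show ?thesis by (simp add: emeasure_space_1[simplified])
qed

lemma (in product_prob_space) emeasure_PiM_Min_gt:
  fixes X :: "'i \<Rightarrow> 'a \<Rightarrow> real"
  assumes "finite I" "I \<noteq> {}" and [measurable]: "\<And>i. i \<in> I \<Longrightarrow> X i \<in> borel_measurable (M i)"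
  shows "emeasure (\<Pi>\<^sub>M i\<in>I. M i) {\<omega> \<in> space (\<Pi>\<^sub>M i\<in>I. M i). t < Min ((\<lambda>i. X i (\<omega> i)) ` I)}
       = (\<Prod>i\<in>I. emeasure (M i) {p \<in> space (M i). t < X i p})"
proof -
  have "{\<omega> \<in> space (\<Pi>\<^sub>M i\<in>I. M i). t < Min ((\<lambda>i. X i (\<omega> i)) ` I)}
      = {\<omega> \<in> space (\<Pi>\<^sub>M i\<in>I. M i). \<forall>i\<in>I. \<omega> i \<in> {p \<in> space (M i). t < X i p}}"
    using assms(1,2) by (auto simp: space_PiM PiE_iff)
  moreover have "{p \<in> space (M i). t < X i p} \<in> sets (M i)" if "i \<in> I" for i
    using that by measurable
  ultimately show ?thesis
    using emeasure_PiM_Collect[of I "\<lambda>i. {p \<in> space (M i). t < X i p}"] assms(1) by simp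
qed

lemma (in product_prob_space) nn_integral_Min_le_of_exp_tails:
  fixes X :: "'i \<Rightarrow> 'a \<Rightarrow> real"
  assumes I: "finite I" "I \<noteq> {}"
    and [measurable]: "\<And>i. i \<in> I \<Longrightarrow> X i \<in> borel_measurable (M i)"
    and nonneg: "\<And>i p. i \<in> I \<Longrightarrow> p \<in> space (M i) \<Longrightarrow> 0 \<le> X i p"
    and tail: "\<And>i t. i \<in> I \<Longrightarrow> 0 \<le> t \<Longrightarrow>
      emeasure (M i) {p \<in> space (M i). t < X i p} \<le> ennreal (exp (- (L * t)))"
    and "L > 0"
  shows "(\<integral>\<^sup>+ \<omega>. ennreal (Min ((\<lambda>i. X i (\<omega> i)) ` I)) \<partial>(\<Pi>\<^sub>M i\<in>I. M i))
       \<le> ennreal (1 / (real (card I) * L))"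
proof -
  let ?m = "\<lambda>\<omega>. Min ((\<lambda>i. X i (\<omega> i)) ` I)"
  have [measurable]: "?m \<in> borel_measurable (\<Pi>\<^sub>M i\<in>I. M i)"
    using I by measurable
  have "?m \<omega> \<ge> 0" if "\<omega> \<in> space (\<Pi>\<^sub>M i\<in>I. M i)" for \<omega>
    using I that nonneg by (auto simp: space_PiM PiE_iff)
  then have "(\<integral>\<^sup>+ \<omega>. ennreal (?m \<omega>) \<partial>(\<Pi>\<^sub>M i\<in>I. M i))
      = (\<integral>\<^sup>+ t. indicator {0..} t *
           emeasure (\<Pi>\<^sub>M i\<in>I. M i) {\<omega> \<in> space (\<Pi>\<^sub>M i\<in>I. M i). t < ?m \<omega>} \<partial>lborel)"
    by (intro nn_integral_eq_tail_integral) (auto intro: P.sigma_finite_measure_axioms)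
  also have "\<dots> = (\<integral>\<^sup>+ t. indicator {0..} t *
      (\<Prod>i\<in>I. emeasure (M i) {p \<in> space (M i). t < X i p}) \<partial>lborel)"
    by (simp only: emeasure_PiM_Min_gt[OF I assms(3)])
  also have "\<dots> \<le> (\<integral>\<^sup>+ t. indicator {0..} t * ennreal (exp (- ((real (card I) * L) * t))) \<partial>lborel)"
  proof (intro nn_integral_mono)
    fix t :: real
    have "indicator {0..} t * (\<Prod>i\<in>I. emeasure (M i) {p \<in> space (M i). t < X i p})
        \<le> indicator {0..} t * (\<Prod>i\<in>I. ennreal (exp (- (L * t))))"
      using tail by (cases "0 \<le> t")
        (auto intro!: mult_left_mono prod_mono_ennreal simp del: prod_constant)
    also have "(\<Prod>i\<in>I. ennreal (exp (- (L * t)))) = ennreal (exp (- ((real (card I) * L) * t)))"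
      by (simp add: ennreal_power exp_of_nat_mult[symmetric] algebra_simps)
    finally show "indicator {0..} t * (\<Prod>i\<in>I. emeasure (M i) {p \<in> space (M i). t < X i p})
        \<le> indicator {0..} t * ennreal (exp (- ((real (card I) * L) * t)))" .
  qed
  also have "\<dots> = ennreal (1 / (real (card I) * L))"
    using I \<open>L > 0\<close> by (intro nn_integral_exp_neg) (simp add: card_gt_0_iff)
  finally show ?thesis .
qed

lemma borel_measurable_frac[measurable]: "frac \<in> borel_measurable (borel :: real measure)"
proof -
  have "(\<lambda>x::real. x - real_of_int \<lfloor>x\<rfloor>) \<in> borel_measurable borel" by measurable
  then show ?thesis by (simp add: frac_def[abs_def])
qed

lemma frac_cases_abs_le_1:
  fixes y :: real assumes "-1 \<le> y" "y \<le> 1"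
  shows "frac y = y \<or> frac y = y + 1 \<or> frac y = y - 1"
proof -
  have "-1 \<le> \<lfloor>y\<rfloor>" "\<lfloor>y\<rfloor> \<le> 1"
    using assms by (auto simp: floor_le_iff le_floor_iff)
  then have "\<lfloor>y\<rfloor> = -1 \<or> \<lfloor>y\<rfloor> = 0 \<or> \<lfloor>y\<rfloor> = 1" by linarith
  then show ?thesis by (auto simp: frac_def)
qed

lemma emeasure_frac_diff_gt:
  assumes c: "0 \<le> c" "c \<le> 1" and s: "0 \<le> s" "s < 1"
  shows "emeasure lborel ({0..1} \<inter> {x. s < frac (c - x)}) \<le> ennreal (1 - s)"
proof (cases "s \<le> c")
  case True
  have "x \<in> {0..<c-s} \<union> {c<..1}" if "x \<in> {0..1}" "s < frac (c - x)" for x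
    using frac_cases_abs_le_1[of "c - x"] frac_lt_1[of "c - x"] that c s by auto
  then have "{0..1} \<inter> {x. s < frac (c - x)} \<subseteq> {0..<c-s} \<union> {c<..1}" by blast
  then have "emeasure lborel ({0..1} \<inter> {x. s < frac (c - x)}) \<le> emeasure lborel ({0..<c-s} \<union> {c<..1})"
    by (intro emeasure_mono) auto
  also have "\<dots> \<le> emeasure lborel {0..<c-s} + emeasure lborel {c<..1}"
    by (intro emeasure_subadditive) auto
  also have "\<dots> = ennreal (1 - s)"
    using True c s by (simp add: ennreal_plus[symmetric])
  finally show ?thesis .
next
  case False
  have "x \<in> {c<..<c+1-s}" if "x \<in> {0..1}" "s < frac (c - x)" for x
    using frac_cases_abs_le_1[of "c - x"] frac_lt_1[of "c - x"] that c s False by auto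
  then have "{0..1} \<inter> {x. s < frac (c - x)} \<subseteq> {c<..<c+1-s}" by blast
  then have "emeasure lborel ({0..1} \<inter> {x. s < frac (c - x)}) \<le> emeasure lborel {c<..<c+1-s}"
    by (intro emeasure_mono) auto
  also have "\<dots> = ennreal (1 - s)"
    using False c s by simp
  finally show ?thesis .
qed

lemma emeasure_frac_diff_gt_swap:
  assumes c: "0 \<le> c" "c \<le> 1" and s: "0 \<le> s" "s < 1"
  shows "emeasure lborel ({0..1} \<inter> {x. s < frac (x - c)}) \<le> ennreal (1 - s)"
proof -
  \<comment> \<open>reflect the unit interval: \<open>x - c = (1 - c) - (1 - x)\<close>\<close>
  let ?S = "{0..1} \<inter> {x. s < frac (x - c)}"
  have [measurable]: "?S \<in> sets borel" by measurable
  have "emeasure lborel ?S = (\<integral>\<^sup>+ x. indicator ?S (1 - x) \<partial>lborel)"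
    using nn_integral_real_affine[of "indicator ?S" "-1" 1] by simp
  also have "\<dots> = (\<integral>\<^sup>+ x. indicator ({0..1} \<inter> {x. s < frac ((1 - c) - x)}) x \<partial>lborel)"
    by (intro nn_integral_cong) (auto simp: indicator_def algebra_simps)
  also have "\<dots> = emeasure lborel ({0..1} \<inter> {x. s < frac ((1 - c) - x)})"
    by simp
  also have "\<dots> \<le> ennreal (1 - s)"
    using c s by (intro emeasure_frac_diff_gt) auto
  finally show ?thesis .
qed

lemma sets_node_space: "sets node_space = sets (borel \<Otimes>\<^sub>M count_space (UNIV :: bool set))"
  unfolding node_space_def
  by (intro sets_pair_measure_cong) (auto simp: sets_uniform_count_measure)

lemma measurable_hit_time[measurable]: "hit_time v c \<in> borel_measurable node_space"
  unfolding measurable_cong_sets[OF sets_node_space refl] hit_time_def[abs_def] by measurable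

lemma prob_space_node_space: "prob_space node_space"
  unfolding node_space_def
  by (intro prob_space_pair prob_space_uniform_measure prob_space_uniform_count_measure) auto

lemma emeasure_node_space_Times:
  assumes "A \<in> sets borel"
  shows "emeasure node_space (A \<times> {d}) = emeasure lborel ({0..1} \<inter> A) * ennreal (1 / 2)"
proof -
  interpret C: prob_space "uniform_count_measure (UNIV :: bool set)"
    by (rule prob_space_uniform_count_measure) auto
  show ?thesis
    unfolding node_space_def using assms
    by (simp add: C.emeasure_pair_measure_Times emeasure_uniform_measure emeasure_uniform_count_measure
        ennreal_divide_numeral divide_ennreal_def Int_commute)
qed

lemma hit_time_nonneg: "v > 0 \<Longrightarrow> 0 \<le> hit_time v c p"
  by (simp add: hit_time_def)

lemma hit_time_less: "v > 0 \<Longrightarrow> hit_time v c p < 1 / v"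
  by (simp add: hit_time_def divide_strict_right_mono frac_lt_1)

lemma emeasure_hit_time_gt:
  assumes c: "0 \<le> c" "c \<le> 1" and "v > 0" "0 \<le> t" "v * t < 1"
  shows "emeasure node_space {p \<in> space node_space. t < hit_time v c p} \<le> ennreal (1 - v * t)"
proof -
  define s where "s = v * t"
  have s: "0 \<le> s" "s < 1" using assms by (simp_all add: s_def)
  define A where "A = {x. s < frac (c - x)} \<times> {True}"
  define B where "B = {x. s < frac (x - c)} \<times> {False}"
  have [measurable]: "A \<in> sets node_space" "B \<in> sets node_space"
    unfolding A_def B_def sets_node_space by measurable
  have "{p \<in> space node_space. t < hit_time v c p} \<subseteq> A \<union> B"
    using \<open>v > 0\<close> by (auto simp: A_def B_def s_def hit_time_def pos_less_divide_eq mult.commute)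
  then have "emeasure node_space {p \<in> space node_space. t < hit_time v c p} \<le> emeasure node_space (A \<union> B)"
    by (intro emeasure_mono) auto
  also have "\<dots> \<le> emeasure node_space A + emeasure node_space B"
    by (intro emeasure_subadditive) auto
  also have "\<dots> \<le> ennreal (1 - s) * ennreal (1 / 2) + ennreal (1 - s) * ennreal (1 / 2)"
    unfolding A_def B_def
    using emeasure_frac_diff_gt[OF c s] emeasure_frac_diff_gt_swap[OF c s]
    by (simp add: emeasure_node_space_Times add_mono mult_right_mono)
  also have "\<dots> = ennreal (1 - s) * (ennreal (1 / 2) + ennreal (1 / 2))"
    by (simp only: distrib_left)
  also have "ennreal (1 / 2) + ennreal (1 / 2) = 1"
    by (subst ennreal_plus[symmetric]) auto
  finally show ?thesis by (simp add: s_def)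
qed

lemma emeasure_hit_time_gt_exp:
  assumes "0 \<le> c" "c \<le> 1" and "v > 0" "0 \<le> t"
  shows "emeasure node_space {p \<in> space node_space. t < hit_time v c p} \<le> ennreal (exp (- (v * t)))"
proof (cases "v * t < 1")
  case True
  have "1 - v * t \<le> exp (- (v * t))"
    using exp_ge_add_one_self[of "- (v * t)"] by simp
  then show ?thesis
    using emeasure_hit_time_gt[OF assms True] by (meson ennreal_leI order_trans)
next
  case False
  then have "1 / v \<le> t"
    using \<open>v > 0\<close> by (simp add: pos_divide_le_eq mult.commute)
  then have "hit_time v c p \<le> t" for p
    using hit_time_less[OF \<open>v > 0\<close>, of c p] by linarith
  then have "{p \<in> space node_space. t < hit_time v c p} = {}"
    by (auto simp: not_less)
  then show ?thesis by (metis emeasure_empty zero_le)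
qed

theorem lemma4:
  fixes v a b :: real and ni nj :: nat
  assumes "v > 0" and "ni > 0" and "nj > 0"
    and "a \<in> {0..1}" and "b \<in> {0..1}"
  shows "I_pass v ni nj a b \<le> 1 / (v * real (ni + nj))"
proof -
  define X where "X k = hit_time v (if k < ni then a else b)" for k
  interpret product_prob_space "\<lambda>_. node_space" "{..<ni + nj}"
    by (intro product_prob_spaceI prob_space_node_space)
  have passage: "passage_time v ni nj a b = (\<lambda>\<omega>. Min ((\<lambda>k. X k (\<omega> k)) ` {..<ni + nj}))"
    by (auto simp: fun_eq_iff passage_time_def X_def intro!: arg_cong[where f = Min])
  have "(\<integral>\<^sup>+ \<omega>. ennreal (passage_time v ni nj a b \<omega>) \<partial>(\<Pi>\<^sub>M k\<in>{..<ni + nj}. node_space))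
      \<le> ennreal (1 / (real (card {..<ni + nj}) * v))"
    unfolding passage using assms
    by (intro nn_integral_Min_le_of_exp_tails)
      (auto simp: X_def hit_time_nonneg intro!: emeasure_hit_time_gt_exp)
  then show ?thesis
    using \<open>v > 0\<close> unfolding I_pass_def by (intro integral_real_bounded) (auto simp: mult.commute)
qed

end
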